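(* Let $n\ge2$, let $c=(c_{i,j})$ be an $n\times(n+1)$ matrix with entries in $\{0,1\}$, $\sigma_1,\ldots,\sigma_n>0$, $\gamma_1,\ldots,\gamma_{n+1}>0$. Let $\mathbf{X}=(X_1,\ldots,X_n)'$ have decumulative distribution function \[ \mathbf{P}[X_1>x_1,\ldots,X_n>x_n]=\prod_{j=1}^{n+1}\left(1+\sum_{i=1}^n\frac{c_{i,j}}{\sigma_i}x_i\right)^{-\gamma_j},\quad (x_1,\ldots,x_n)'\in(0,\infty)^n. \] For $1\le k\ne l\le n$ let $\gamma^\ast_{c,k}=\sum_jc_{k,j}\gamma_j$, $\gamma^\ast_{c,l}=\sum_jc_{l,j}\gamma_j$ and $\gamma_{c,(k,l)}=\sum_{j=1}^{n+1}c_{k,j}c_{l,j}\gamma_j$. If $\gamma^\ast_{c,k}>2$ and $\gamma^\ast_{c,l}>2$, then \[ \mathbf{Cov}[X_k,X_l]=\frac{\sigma_k\sigma_l}{(\gamma^\ast_{c,k}-1)(\gamma^\ast_{c,l}-1)}\left({}_3F_2\left(\gamma_{c,(k,l)},1,1;\gamma^\ast_{c,k},\gamma^\ast_{c,l};1\right)-1\right). \]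
   Context: The generalized hypergeometric function is ${}_{q+1}F_q(a_1,\ldots,a_{q+1};b_1,\ldots,b_q;z)=\sum_{k=0}^\infty\frac{(a_1)_k\cdots(a_{q+1})_k}{(b_1)_k\cdots(b_q)_k}\frac{z^k}{k!}$, with $(a)_k=\Gamma(a+k)/\Gamma(a)$ the Pochhammer symbol. *)

theory Defs
  imports "HOL-Probability.Probability"
begin

definition hypergeom :: "real list \<Rightarrow> real list \<Rightarrow> real \<Rightarrow> real" where
  "hypergeom as bs z =
     (\<Sum>k. (\<Prod>a\<leftarrow>as. pochhammer a k) / (\<Prod>b\<leftarrow>bs. pochhammer b k) * z ^ k / fact k)"

definition covariance :: "'a measure \<Rightarrow> ('a \<Rightarrow> real) \<Rightarrow> ('a \<Rightarrow> real) \<Rightarrow> real" where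
  "covariance M Y Z =
     integral\<^sup>L M (\<lambda>\<omega>. (Y \<omega> - integral\<^sup>L M Y) * (Z \<omega> - integral\<^sup>L M Z))"

end

theory Submission
  imports Defs "HOL-Real_Asymp.Real_Asymp"
begin

text \<open>For nonnegative random variables E[X_k] is the integral of P(X_k > s) over s \<ge> 0, and
  E[X_k X_l] the integral of P(X_k > s, X_l > t) over s, t \<ge> 0. Since every c_ij is 0 or 1,
  grouping the factors of the survival function by the pair (c_kj, c_lj) gives, with u = s/\<sigma>_k
  and v = t/\<sigma>_l, P(X_k > s, X_l > t) = (1+u) powr -(A-g) * (1+v) powr -(B-g) * (1+u+v) powr -g,
  where A, B are the marginal shapes and g the shared one. As 1+u+v = (1+u)(1+v)(1-w) with
  w = uv/((1+u)(1+v)) in [0,1), the binomial series in w expands this into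
  \<Sum>_m (g)_m/m! * u^m (1+u) powr -(A+m) * v^m (1+v) powr -(B+m), a series of products of Beta
  integrals of the second kind. Integrating termwise with
  \<integral>_0^\<infinity> (x/\<sigma>)^m (1+x/\<sigma>) powr -(A+m) dx = \<sigma> m!/((A-1)(A)_m)
  gives \<sigma>_k \<sigma>_l/((A-1)(B-1)) * 3F2(g,1,1; A,B; 1), and the means are \<sigma>_k/(A-1), \<sigma>_l/(B-1).
  The survival function is only prescribed on the open orthant; continuity from above extends it
  to the boundary, which in particular shows X_i > 0 almost surely.\<close>

section \<open>Beta integrals of the second kind\<close>

lemma nn_integral_shifted_powr:
  fixes a \<sigma> :: real
  assumes a: "a > 1" and \<sigma>: "\<sigma> > 0"
  shows "(\<integral>\<^sup>+x\<in>{0..}. ennreal ((1 + x/\<sigma>) powr (-a)) \<partial>lborel) = ennreal (\<sigma> / (a - 1))"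
proof -
  define F where "F x = - \<sigma> / (a - 1) * (1 + x/\<sigma>) powr (1 - a)" for x
  have "(\<integral>\<^sup>+x\<in>{0..}. ennreal ((1 + x/\<sigma>) powr (-a)) \<partial>lborel) = ennreal (0 - F 0)"
  proof (rule nn_integral_FTC_atLeast)
    show "(F has_real_derivative (1 + x/\<sigma>) powr (-a)) (at x)" if "0 \<le> x" for x
    proof -
      have pos: "1 + x/\<sigma> > 0" using that \<sigma> by (simp add: add_pos_nonneg)
      have "((\<lambda>x. 1 + x/\<sigma>) has_real_derivative 1/\<sigma>) (at x)"
        using \<sigma> by (auto intro!: derivative_eq_intros)
      from DERIV_cmult[OF DERIV_fun_powr[OF this pos, of "1 - a"], of "- \<sigma> / (a - 1)"]
      have "(F has_real_derivative - \<sigma> / (a - 1) * ((1 - a) * (1 + x/\<sigma>) powr (-a) * (1/\<sigma>))) (at x)"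
        unfolding F_def by simp
      moreover have "- \<sigma> / (a - 1) * ((1 - a) * (1 + x/\<sigma>) powr (-a) * (1/\<sigma>)) = (1 + x/\<sigma>) powr (-a)"
        using a \<sigma> by (simp add: field_simps)
      ultimately show ?thesis by simp
    qed
    show "(F \<longlongrightarrow> 0) at_top" unfolding F_def using a \<sigma> by real_asymp
  qed auto
  also have "0 - F 0 = \<sigma> / (a - 1)" by (simp add: F_def)
  finally show ?thesis .
qed

definition beta_prime_integral :: "nat \<Rightarrow> real \<Rightarrow> real \<Rightarrow> ennreal" where
  "beta_prime_integral m a \<sigma> =
     (\<integral>\<^sup>+x\<in>{0..}. ennreal ((x/\<sigma>)^m * (1 + x/\<sigma>) powr (-(a + real m))) \<partial>lborel)"

lemma beta_prime_integrand_Suc: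
  fixes y a :: real assumes "y \<ge> 0"
  shows "y^Suc m * (1 + y) powr (-(a + real (Suc m))) + y^m * (1 + y) powr (-(a + 1 + real m))
       = y^m * (1 + y) powr (-(a + real m))"
proof -
  define p where "p = (1 + y) powr (-(a + 1 + real m))"
  have "(1 + y) * p = (1 + y) powr (1 + -(a + 1 + real m))"
    unfolding p_def using assms by (subst powr_add) simp
  then have "(1 + y) powr (-(a + real m)) = (1 + y) * p"
    by (simp add: algebra_simps)
  then show ?thesis unfolding p_def by (simp add: algebra_simps)
qed

lemma beta_prime_integral_Suc:
  assumes "\<sigma> > 0"
  shows "beta_prime_integral (Suc m) a \<sigma> + beta_prime_integral m (a + 1) \<sigma> = beta_prime_integral m a \<sigma>"
proof -
  have "ennreal ((x/\<sigma>)^Suc m * (1 + x/\<sigma>) powr (-(a + real (Suc m)))) +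
        ennreal ((x/\<sigma>)^m * (1 + x/\<sigma>) powr (-(a + 1 + real m)))
      = ennreal ((x/\<sigma>)^m * (1 + x/\<sigma>) powr (-(a + real m)))" if "x \<ge> 0" for x
    using beta_prime_integrand_Suc[of "x/\<sigma>" m a] that assms
    by (simp add: ennreal_plus[symmetric] del: ennreal_plus)
  then show ?thesis
    unfolding beta_prime_integral_def
    by (subst nn_integral_add[symmetric]) (auto intro!: nn_integral_cong simp: indicator_def)
qed

lemma beta_prime_integral_eq:
  assumes a: "a > 1" and \<sigma>: "\<sigma> > 0"
  shows "beta_prime_integral m a \<sigma> = ennreal (\<sigma> * fact m / ((a - 1) * pochhammer a m))"
  using a
proof (induction m arbitrary: a)
  case 0
  then show ?case
    using nn_integral_shifted_powr[OF 0 \<sigma>] by (simp add: beta_prime_integral_def)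
next
  case (Suc m)
  have pos: "pochhammer a m > 0" "a + real m > 0"
    using Suc.prems by (auto intro: pochhammer_pos add_pos_nonneg)
  have shift: "pochhammer (a + 1) m = pochhammer a m * (a + real m) / a"
    using pochhammer_rec[of a m] pochhammer_Suc[of a m] Suc.prems by (simp add: field_simps)
  define x where "x = \<sigma> * fact (Suc m) / ((a - 1) * pochhammer a (Suc m))"
  define y where "y = \<sigma> * fact m / ((a + 1 - 1) * pochhammer (a + 1) m)"
  have "x + y = \<sigma> * fact m / ((a - 1) * pochhammer a m)"
    using Suc.prems pos unfolding x_def y_def shift pochhammer_Suc fact_Suc
    by (simp add: divide_simps) (simp add: algebra_simps)
  moreover have "x \<ge> 0" "y \<ge> 0"
    using Suc.prems \<sigma> pochhammer_pos[of a "Suc m"] pochhammer_pos[of "a + 1" m]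
    unfolding x_def y_def by auto
  ultimately have "beta_prime_integral (Suc m) a \<sigma> + ennreal y = ennreal x + ennreal y"
    using beta_prime_integral_Suc[OF \<sigma>, of m a] Suc.IH[of a] Suc.IH[of "a + 1"] Suc.prems
    by (simp add: y_def ennreal_plus[symmetric] del: ennreal_plus)
  then show ?case
    unfolding x_def by (simp add: add.commute[of _ "ennreal y"] ennreal_add_left_cancel)
qed

lemma pochhammer_nonneg_of_nonneg:
  fixes x :: "'a :: linordered_semidom"
  shows "0 \<le> x \<Longrightarrow> 0 \<le> pochhammer x n"
  unfolding pochhammer_prod by (auto intro!: prod_nonneg)

section \<open>Expansion of the bivariate survival function\<close>

lemma pochhammer_series_sums:
  fixes w g :: real
  assumes "\<bar>w\<bar> < 1"
  shows "(\<lambda>m. pochhammer g m / fact m * w^m) sums (1 - w) powr (-g)"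
proof -
  have "((-g) gchoose m) * (-w)^m = pochhammer g m / fact m * w^m" for m
  proof -
    have "((-g) gchoose m) * (-w)^m = ((-1)^m * (-1)^m) * (pochhammer g m / fact m * w^m)"
      by (simp add: gbinomial_pochhammer power_minus[of w])
    then show ?thesis by (simp flip: power_add)
  qed
  then show ?thesis
    using gen_binomial_real[of "-w" "-g"] assms by simp
qed

lemma mixed_powr_product_sums:
  fixes u v g a b :: real
  assumes u: "u \<ge> 0" and v: "v \<ge> 0"
  shows "(\<lambda>m. pochhammer g m / fact m * (u^m * (1 + u) powr (-(a + real m))) * (v^m * (1 + v) powr (-(b + real m))))
           sums ((1 + u) powr (-(a - g)) * (1 + v) powr (-(b - g)) * (1 + u + v) powr (-g))"
proof -
  define w where "w = u * v / ((1 + u) * (1 + v))"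
  define K where "K = (1 + u) powr (-a) * (1 + v) powr (-b)"
  have pu: "1 + u > 0" and pv: "1 + v > 0" using u v by auto
  have "u * v < (1 + u) * (1 + v)" using u v by (simp add: algebra_simps add_pos_nonneg)
  then have "\<bar>w\<bar> < 1" unfolding w_def using u v pu pv by simp
  from sums_mult[OF pochhammer_series_sums[OF this], of K]
  have S: "(\<lambda>m. K * (pochhammer g m / fact m * w^m)) sums (K * (1 - w) powr (-g))" .
  have "1 - w = (1 + u + v) / ((1 + u) * (1 + v))"
  proof -
    have "(1 + u) * (1 + v) > 0" using pu pv by simp
    then show ?thesis unfolding w_def by (simp add: field_simps)
  qed
  then have "(1 - w) powr (-g) = (1 + u + v) powr (-g) / ((1 + u) powr (-g) * (1 + v) powr (-g))"
    using u v by (simp add: powr_divide powr_mult)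
  also have "\<dots> = (1 + u + v) powr (-g) * (1 + u) powr g * (1 + v) powr g"
    by (simp add: powr_minus divide_inverse)
  finally have "K * (1 - w) powr (-g)
      = ((1 + u) powr (-a) * (1 + u) powr g) * ((1 + v) powr (-b) * (1 + v) powr g) * (1 + u + v) powr (-g)"
    unfolding K_def by (simp only: mult_ac)
  also have "\<dots> = (1 + u) powr (-(a - g)) * (1 + v) powr (-(b - g)) * (1 + u + v) powr (-g)"
    by (simp add: powr_add[symmetric])
  finally have lim: "K * (1 - w) powr (-g) = \<dots>" .
  have terms: "K * (pochhammer g m / fact m * w^m) =
      pochhammer g m / fact m * (u^m * (1 + u) powr (-(a + real m))) * (v^m * (1 + v) powr (-(b + real m)))" for m
  proof -
    have "(1 + u) powr (-a) / (1 + u)^m = (1 + u) powr (-(a + real m))"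
         "(1 + v) powr (-b) / (1 + v)^m = (1 + v) powr (-(b + real m))"
      using pu pv by (simp_all add: powr_realpow[symmetric] powr_diff[symmetric])
    moreover have "K * (pochhammer g m / fact m * w^m) = pochhammer g m / fact m
        * (u^m * ((1 + u) powr (-a) / (1 + u)^m)) * (v^m * ((1 + v) powr (-b) / (1 + v)^m))"
      unfolding K_def w_def by (simp add: power_divide power_mult_distrib mult_ac)
    ultimately show ?thesis by simp
  qed
  show ?thesis using S unfolding lim terms .
qed

lemma nn_integral_mixed_powr_product_series:
  fixes a b g \<sigma>\<^sub>1 \<sigma>\<^sub>2 :: real
  assumes \<sigma>\<^sub>1: "\<sigma>\<^sub>1 > 0" and \<sigma>\<^sub>2: "\<sigma>\<^sub>2 > 0" and g: "g \<ge> 0"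
  shows "(\<integral>\<^sup>+s\<in>{0..}. (\<integral>\<^sup>+t\<in>{0..}. ennreal ((1 + s/\<sigma>\<^sub>1) powr (-(a - g)) * (1 + t/\<sigma>\<^sub>2) powr (-(b - g))
            * (1 + s/\<sigma>\<^sub>1 + t/\<sigma>\<^sub>2) powr (-g)) \<partial>lborel) \<partial>lborel)
     = (\<Sum>m. ennreal (pochhammer g m / fact m) * beta_prime_integral m a \<sigma>\<^sub>1 * beta_prime_integral m b \<sigma>\<^sub>2)"
proof -
  define f where "f c \<sigma> m x = (x/\<sigma>)^m * (1 + x/\<sigma>) powr (-(c + real m))" for c \<sigma> :: real and m and x :: real
  define p where "p m = pochhammer g m / fact m" for m
  have p: "p m \<ge> 0" for m unfolding p_def using g pochhammer_nonneg_of_nonneg[of g m] by simp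
  have f: "0 \<le> x \<Longrightarrow> 0 < \<sigma> \<Longrightarrow> 0 \<le> f c \<sigma> m x" for c \<sigma> m x unfolding f_def by simp
  have [measurable]: "f c \<sigma> m \<in> borel_measurable borel" for c \<sigma> m unfolding f_def by measurable
  have beta: "beta_prime_integral m c \<sigma> = (\<integral>\<^sup>+x\<in>{0..}. ennreal (f c \<sigma> m x) \<partial>lborel)" for m c \<sigma>
    unfolding beta_prime_integral_def f_def ..
  have expand: "ennreal ((1 + s/\<sigma>\<^sub>1) powr (-(a - g)) * (1 + t/\<sigma>\<^sub>2) powr (-(b - g)) * (1 + s/\<sigma>\<^sub>1 + t/\<sigma>\<^sub>2) powr (-g))
      = (\<Sum>m. ennreal (p m * f a \<sigma>\<^sub>1 m s) * ennreal (f b \<sigma>\<^sub>2 m t))" if "s \<ge> 0" "t \<ge> 0" for s t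
  proof -
    have S: "(\<lambda>m. p m * f a \<sigma>\<^sub>1 m s * f b \<sigma>\<^sub>2 m t) sums
        ((1 + s/\<sigma>\<^sub>1) powr (-(a - g)) * (1 + t/\<sigma>\<^sub>2) powr (-(b - g)) * (1 + s/\<sigma>\<^sub>1 + t/\<sigma>\<^sub>2) powr (-g))"
      using mixed_powr_product_sums[of "s/\<sigma>\<^sub>1" "t/\<sigma>\<^sub>2" g a b] that \<sigma>\<^sub>1 \<sigma>\<^sub>2 unfolding p_def f_def by simp
    have "0 \<le> p m * f a \<sigma>\<^sub>1 m s * f b \<sigma>\<^sub>2 m t" for m using p f that \<sigma>\<^sub>1 \<sigma>\<^sub>2 by simp
    then show ?thesis
      using suminf_ennreal2[OF _ sums_summable[OF S]] sums_unique[OF S] p f that \<sigma>\<^sub>1 \<sigma>\<^sub>2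
      by (simp add: ennreal_mult)
  qed
  have inner: "(\<integral>\<^sup>+t\<in>{0..}. ennreal ((1 + s/\<sigma>\<^sub>1) powr (-(a - g)) * (1 + t/\<sigma>\<^sub>2) powr (-(b - g))
            * (1 + s/\<sigma>\<^sub>1 + t/\<sigma>\<^sub>2) powr (-g)) \<partial>lborel)
      = (\<Sum>m. ennreal (p m) * ennreal (f a \<sigma>\<^sub>1 m s) * beta_prime_integral m b \<sigma>\<^sub>2)" if s: "s \<ge> 0" for s
  proof -
    have "(\<integral>\<^sup>+t\<in>{0..}. ennreal ((1 + s/\<sigma>\<^sub>1) powr (-(a - g)) * (1 + t/\<sigma>\<^sub>2) powr (-(b - g))
            * (1 + s/\<sigma>\<^sub>1 + t/\<sigma>\<^sub>2) powr (-g)) \<partial>lborel)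
        = (\<integral>\<^sup>+t. (\<Sum>m. ennreal (p m * f a \<sigma>\<^sub>1 m s) * (ennreal (f b \<sigma>\<^sub>2 m t) * indicator {0..} t)) \<partial>lborel)"
      using expand[OF s] by (intro nn_integral_cong) (simp add: indicator_def)
    also have "\<dots> = (\<Sum>m. ennreal (p m * f a \<sigma>\<^sub>1 m s) * beta_prime_integral m b \<sigma>\<^sub>2)"
      by (simp add: nn_integral_suminf nn_integral_cmult beta)
    finally show ?thesis using p f s \<sigma>\<^sub>1 by (simp add: ennreal_mult)
  qed
  have "(\<integral>\<^sup>+s\<in>{0..}. (\<integral>\<^sup>+t\<in>{0..}. ennreal ((1 + s/\<sigma>\<^sub>1) powr (-(a - g)) * (1 + t/\<sigma>\<^sub>2) powr (-(b - g))
            * (1 + s/\<sigma>\<^sub>1 + t/\<sigma>\<^sub>2) powr (-g)) \<partial>lborel) \<partial>lborel)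
      = (\<integral>\<^sup>+s. (\<Sum>m. ennreal (p m) * (ennreal (f a \<sigma>\<^sub>1 m s) * indicator {0..} s) * beta_prime_integral m b \<sigma>\<^sub>2) \<partial>lborel)"
    using inner by (intro nn_integral_cong) (simp add: indicator_def)
  also have "\<dots> = (\<Sum>m. ennreal (p m) * beta_prime_integral m a \<sigma>\<^sub>1 * beta_prime_integral m b \<sigma>\<^sub>2)"
    by (simp add: nn_integral_suminf nn_integral_cmult nn_integral_multc beta)
  finally show ?thesis unfolding p_def .
qed

lemma fact_div_pochhammer_telescoping:
  fixes b :: real
  assumes b: "b > 2"
  defines "f \<equiv> \<lambda>m. fact m * (b + real m - 1) / ((b - 2) * pochhammer b m)"
  shows "fact m / pochhammer b m = f m - f (Suc m)"
proof -
  have "pochhammer b m > 0" "b + real m > 0" using b by (auto intro: pochhammer_pos add_pos_nonneg)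
  then show ?thesis
    using b unfolding f_def pochhammer_Suc fact_Suc by (simp add: divide_simps) (simp add: algebra_simps)
qed

lemma summable_fact_div_pochhammer:
  fixes b :: real
  assumes b: "b > 2"
  shows "summable (\<lambda>m. fact m / pochhammer b m)"
proof -
  define f where "f m = fact m * (b + real m - 1) / ((b - 2) * pochhammer b m)" for m
  have "0 \<le> f m" for m unfolding f_def using b pochhammer_pos[of b m] by simp
  then have "(\<Sum>m<N. fact m / pochhammer b m) \<le> f 0" for N
    using fact_div_pochhammer_telescoping[OF b] sum_lessThan_telescope'[of f N]
    unfolding f_def by simp
  moreover have "0 \<le> fact m / pochhammer b m" for m
    using b pochhammer_pos[of b m] by simp
  ultimately show ?thesis by (rule summableI_nonneg_bounded[rotated])
qed

lemma summable_pochhammer_fact_div_pochhammer: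
  fixes g a b :: real
  assumes g: "0 \<le> g" "g \<le> a" and b: "b > 2"
  shows "summable (\<lambda>m. pochhammer g m * fact m / (pochhammer a m * pochhammer b m))"
proof (rule summable_comparison_test'[OF summable_fact_div_pochhammer[OF b]])
  fix m
  have "pochhammer g m \<le> pochhammer a m"
    unfolding pochhammer_prod using g by (intro prod_mono) auto
  then have "pochhammer g m / pochhammer a m \<le> 1"
    using pochhammer_nonneg_of_nonneg[of g m] g by (auto simp: divide_le_eq_1)
  moreover have "0 \<le> pochhammer g m / pochhammer a m" "0 \<le> fact m / pochhammer b m"
    using g b pochhammer_nonneg_of_nonneg[of g m] pochhammer_nonneg_of_nonneg[of a m] pochhammer_pos[of b m]
    by auto
  ultimately have "pochhammer g m / pochhammer a m * (fact m / pochhammer b m) \<le> fact m / pochhammer b m"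
    using mult_left_le_one_le by blast
  moreover have "norm (pochhammer g m * fact m / (pochhammer a m * pochhammer b m))
      = pochhammer g m / pochhammer a m * (fact m / pochhammer b m)"
    using g b pochhammer_nonneg_of_nonneg[of g m] pochhammer_nonneg_of_nonneg[of a m] pochhammer_pos[of b m]
    by simp
  ultimately show "norm (pochhammer g m * fact m / (pochhammer a m * pochhammer b m)) \<le> fact m / pochhammer b m"
    by simp
qed

lemma hypergeom_3F2_at_1:
  "hypergeom [g, 1, 1] [a, b] 1 = (\<Sum>m. pochhammer g m * fact m / (pochhammer a m * pochhammer b m))"
  unfolding hypergeom_def by (simp add: pochhammer_fact[symmetric] field_simps)

lemma hypergeom_3F2_at_1_nonneg:
  fixes g a b :: real
  assumes g: "0 \<le> g" "g \<le> a" and b: "b > 2"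
  shows "0 \<le> hypergeom [g, 1, 1] [a, b] 1"
  unfolding hypergeom_3F2_at_1
  using summable_pochhammer_fact_div_pochhammer[OF assms] assms
    pochhammer_nonneg_of_nonneg[of g] pochhammer_nonneg_of_nonneg[of a] pochhammer_pos[of b]
  by (intro suminf_nonneg divide_nonneg_nonneg mult_nonneg_nonneg) (auto intro: less_imp_le)

lemma nn_integral_mixed_powr_product:
  fixes a b g \<sigma>\<^sub>1 \<sigma>\<^sub>2 :: real
  assumes a: "a > 1" and b: "b > 2" and g: "0 \<le> g" "g \<le> a" and \<sigma>\<^sub>1: "\<sigma>\<^sub>1 > 0" and \<sigma>\<^sub>2: "\<sigma>\<^sub>2 > 0"
  shows "(\<integral>\<^sup>+s\<in>{0..}. (\<integral>\<^sup>+t\<in>{0..}. ennreal ((1 + s/\<sigma>\<^sub>1) powr (-(a - g)) * (1 + t/\<sigma>\<^sub>2) powr (-(b - g))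
            * (1 + s/\<sigma>\<^sub>1 + t/\<sigma>\<^sub>2) powr (-g)) \<partial>lborel) \<partial>lborel)
     = ennreal (\<sigma>\<^sub>1 * \<sigma>\<^sub>2 / ((a - 1) * (b - 1)) * hypergeom [g, 1, 1] [a, b] 1)"
proof -
  define h where "h m = pochhammer g m * fact m / (pochhammer a m * pochhammer b m)" for m
  define C where "C = \<sigma>\<^sub>1 * \<sigma>\<^sub>2 / ((a - 1) * (b - 1))"
  have pos: "pochhammer a m > 0" "pochhammer b m > 0" for m
    using a b by (auto intro: pochhammer_pos)
  have "C \<ge> 0" "h m \<ge> 0" for m
    unfolding C_def h_def using a b \<sigma>\<^sub>1 \<sigma>\<^sub>2 pos[of m] g pochhammer_nonneg_of_nonneg[of g m] by auto
  moreover have "summable h"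
    unfolding h_def using summable_pochhammer_fact_div_pochhammer[OF g b] .
  moreover have "ennreal (pochhammer g m / fact m) * beta_prime_integral m a \<sigma>\<^sub>1 * beta_prime_integral m b \<sigma>\<^sub>2
      = ennreal (C * h m)" for m
  proof -
    have "pochhammer g m / fact m * (\<sigma>\<^sub>1 * fact m / ((a - 1) * pochhammer a m))
          * (\<sigma>\<^sub>2 * fact m / ((b - 1) * pochhammer b m)) = C * h m"
      unfolding C_def h_def by (simp add: field_simps)
    then show ?thesis
      using a b \<sigma>\<^sub>1 \<sigma>\<^sub>2 g pos[of m] pochhammer_nonneg_of_nonneg[of g m]
      by (simp add: beta_prime_integral_eq ennreal_mult[symmetric])
  qed
  ultimately have "(\<Sum>m. ennreal (pochhammer g m / fact m) * beta_prime_integral m a \<sigma>\<^sub>1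
        * beta_prime_integral m b \<sigma>\<^sub>2) = ennreal (C * (\<Sum>m. h m))"
    by (simp add: suminf_ennreal2 summable_mult suminf_mult)
  then show ?thesis
    unfolding nn_integral_mixed_powr_product_series[OF \<sigma>\<^sub>1 \<sigma>\<^sub>2 g(1)] hypergeom_3F2_at_1 C_def h_def .
qed

section \<open>Moments from survival functions\<close>

lemma nn_integral_eq_nn_integral_survival:
  fixes Y :: "'a \<Rightarrow> real"
  assumes "sigma_finite_measure M" and Y[measurable]: "Y \<in> borel_measurable M"
    and nonneg: "AE \<omega> in M. Y \<omega> \<ge> 0"
  shows "(\<integral>\<^sup>+\<omega>. ennreal (Y \<omega>) \<partial>M) = (\<integral>\<^sup>+s\<in>{0..}. emeasure M {\<omega>\<in>space M. Y \<omega> > s} \<partial>lborel)"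
proof -
  interpret pair_sigma_finite M lborel
    using assms(1) by (intro pair_sigma_finite.intro) (auto intro: lborel.sigma_finite_measure_axioms)
  define G where "G \<omega> s = (if 0 \<le> s \<and> s < Y \<omega> then 1 else 0 :: ennreal)" for \<omega> s
  have G_measurable: "case_prod G \<in> borel_measurable (M \<Otimes>\<^sub>M lborel)"
    unfolding G_def by measurable
  have "G \<omega> = indicator {0..<Y \<omega>}" for \<omega>
    unfolding G_def by (auto simp: indicator_def)
  then have "(\<integral>\<^sup>+\<omega>. ennreal (Y \<omega>) \<partial>M) = (\<integral>\<^sup>+\<omega>. (\<integral>\<^sup>+s. G \<omega> s \<partial>lborel) \<partial>M)"
    using nonneg by (intro nn_integral_cong_AE) auto
  also have "\<dots> = (\<integral>\<^sup>+s. (\<integral>\<^sup>+\<omega>. G \<omega> s \<partial>M) \<partial>lborel)"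
    using Fubini'[OF G_measurable] by simp
  also have "\<dots> = (\<integral>\<^sup>+s\<in>{0..}. emeasure M {\<omega>\<in>space M. Y \<omega> > s} \<partial>lborel)"
  proof (rule nn_integral_cong)
    fix s :: real
    have "(\<integral>\<^sup>+\<omega>. G \<omega> s \<partial>M) = (\<integral>\<^sup>+\<omega>. indicator {\<omega>\<in>space M. Y \<omega> > s} \<omega> * indicator {0..} s \<partial>M)"
      by (intro nn_integral_cong) (auto simp: G_def indicator_def)
    also have "\<dots> = emeasure M {\<omega>\<in>space M. Y \<omega> > s} * indicator {0..} s"
      by (subst nn_integral_multc) auto
    finally show "(\<integral>\<^sup>+\<omega>. G \<omega> s \<partial>M) = emeasure M {\<omega>\<in>space M. Y \<omega> > s} * indicator {0..} s" .
  qed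
  finally show ?thesis .
qed

lemma nn_integral_mult_eq_nn_integral_joint_survival:
  fixes Y Z :: "'a \<Rightarrow> real"
  assumes "sigma_finite_measure M"
    and Y[measurable]: "Y \<in> borel_measurable M" and Z[measurable]: "Z \<in> borel_measurable M"
    and nonneg: "AE \<omega> in M. Y \<omega> \<ge> 0 \<and> Z \<omega> \<ge> 0"
  shows "(\<integral>\<^sup>+\<omega>. ennreal (Y \<omega> * Z \<omega>) \<partial>M) =
    (\<integral>\<^sup>+s\<in>{0..}. (\<integral>\<^sup>+t\<in>{0..}. emeasure M {\<omega>\<in>space M. Y \<omega> > s \<and> Z \<omega> > t} \<partial>lborel) \<partial>lborel)"
proof -
  interpret pair_sigma_finite M lborel
    using assms(1) by (intro pair_sigma_finite.intro) (auto intro: lborel.sigma_finite_measure_axioms)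
  define G where "G \<omega> s t = (if 0 \<le> s \<and> s < Y \<omega> \<and> 0 \<le> t \<and> t < Z \<omega> then 1 else 0 :: ennreal)" for \<omega> s t
  have G_measurable: "(\<lambda>(\<omega>, t). G \<omega> s t) \<in> borel_measurable (M \<Otimes>\<^sub>M lborel)" for s
    unfolding G_def by measurable
  have "(\<lambda>(x, t). G (fst x) (snd x) t) \<in> borel_measurable ((M \<Otimes>\<^sub>M lborel) \<Otimes>\<^sub>M lborel)"
    unfolding G_def by measurable
  from lborel.borel_measurable_nn_integral[OF this]
  have G_inner_measurable: "(\<lambda>(\<omega>, s). \<integral>\<^sup>+t. G \<omega> s t \<partial>lborel) \<in> borel_measurable (M \<Otimes>\<^sub>M lborel)"
    by (simp add: case_prod_beta')
  have "G \<omega> s = (\<lambda>t. indicator {0..<Y \<omega>} s * indicator {0..<Z \<omega>} t)" for \<omega> s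
    unfolding G_def by (auto simp: indicator_def)
  then have "(\<integral>\<^sup>+\<omega>. ennreal (Y \<omega> * Z \<omega>) \<partial>M) = (\<integral>\<^sup>+\<omega>. (\<integral>\<^sup>+s. (\<integral>\<^sup>+t. G \<omega> s t \<partial>lborel) \<partial>lborel) \<partial>M)"
    using nonneg by (intro nn_integral_cong_AE)
      (auto simp: nn_integral_cmult nn_integral_multc ennreal_mult)
  also have "\<dots> = (\<integral>\<^sup>+s. (\<integral>\<^sup>+t. (\<integral>\<^sup>+\<omega>. G \<omega> s t \<partial>M) \<partial>lborel) \<partial>lborel)"
    using Fubini'[OF G_inner_measurable] Fubini'[OF G_measurable] by simp
  also have "\<dots> = (\<integral>\<^sup>+s\<in>{0..}. (\<integral>\<^sup>+t\<in>{0..}. emeasure M {\<omega>\<in>space M. Y \<omega> > s \<and> Z \<omega> > t} \<partial>lborel) \<partial>lborel)"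
  proof -
    have "(\<integral>\<^sup>+\<omega>. G \<omega> s t \<partial>M)
        = emeasure M {\<omega>\<in>space M. Y \<omega> > s \<and> Z \<omega> > t} * indicator {0..} t * indicator {0..} s" for s t
    proof -
      have "(\<integral>\<^sup>+\<omega>. G \<omega> s t \<partial>M) = (\<integral>\<^sup>+\<omega>. indicator {\<omega>\<in>space M. Y \<omega> > s \<and> Z \<omega> > t} \<omega>
          * (indicator {0..} t * indicator {0..} s) \<partial>M)"
        unfolding G_def by (intro nn_integral_cong) (auto simp: indicator_def)
      then show ?thesis by (simp add: nn_integral_multc mult.assoc)
    qed
    then show ?thesis by (simp add: nn_integral_multc)
  qed
  finally show ?thesis .
qed

lemma (in finite_measure) measure_survival_eq_from_above:
  fixes X :: "'i \<Rightarrow> 'a \<Rightarrow> real" and F :: "('i \<Rightarrow> real) \<Rightarrow> real"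
  assumes "finite I" and [measurable]: "\<And>i. i \<in> I \<Longrightarrow> X i \<in> borel_measurable M"
    and F: "\<And>y. (\<forall>i\<in>I. y i > x i) \<Longrightarrow> measure M {\<omega> \<in> space M. \<forall>i\<in>I. X i \<omega> > y i} = F y"
    and F_lim: "(\<lambda>m. F (\<lambda>i. x i + inverse (real (Suc m)))) \<longlonglongrightarrow> F x"
  shows "measure M {\<omega> \<in> space M. \<forall>i\<in>I. X i \<omega> > x i} = F x"
proof -
  define S where "S m = {\<omega> \<in> space M. \<forall>i\<in>I. X i \<omega> > x i + inverse (real (Suc m))}" for m
  have "S m \<in> sets M" for m
    unfolding S_def using \<open>finite I\<close> by measurable
  then have "range S \<subseteq> sets M" by auto
  moreover have "incseq S"
  proof (rule incseq_SucI)
    fix m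
    have "x i + inverse (real (Suc (Suc m))) \<le> x i + inverse (real (Suc m))" for i
      by (simp add: field_simps)
    then show "S m \<subseteq> S (Suc m)" unfolding S_def by (blast intro: le_less_trans)
  qed
  moreover have "(\<Union>m. S m) = {\<omega> \<in> space M. \<forall>i\<in>I. X i \<omega> > x i}"
  proof (intro equalityI subsetI)
    fix \<omega> assume \<omega>: "\<omega> \<in> {\<omega> \<in> space M. \<forall>i\<in>I. X i \<omega> > x i}"
    have "\<forall>\<^sub>F m in sequentially. x i + inverse (real (Suc m)) < X i \<omega>" if "i \<in> I" for i
      using \<omega> that tendsto_add[OF tendsto_const LIMSEQ_inverse_real_of_nat, of "x i"]
      by (intro order_tendstoD(2)[of _ "x i"]) auto
    then have "\<forall>\<^sub>F m in sequentially. \<forall>i\<in>I. x i + inverse (real (Suc m)) < X i \<omega>"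
      using \<open>finite I\<close> by (simp add: eventually_ball_finite)
    then obtain m where "\<forall>i\<in>I. x i + inverse (real (Suc m)) < X i \<omega>"
      by (auto simp: eventually_sequentially)
    then show "\<omega> \<in> (\<Union>m. S m)" using \<omega> unfolding S_def by auto
  qed (auto simp: S_def intro: less_trans[rotated])
  ultimately have "(\<lambda>m. measure M (S m)) \<longlonglongrightarrow> measure M {\<omega> \<in> space M. \<forall>i\<in>I. X i \<omega> > x i}"
    using finite_Lim_measure_incseq[of S] by simp
  moreover have "measure M (S m) = F (\<lambda>i. x i + inverse (real (Suc m)))" for m
    unfolding S_def by (rule F) simp
  ultimately show ?thesis using F_lim LIMSEQ_unique by simp
qed

lemma (in prob_space) covariance_eq:
  assumes "integrable M Y" "integrable M Z" "integrable M (\<lambda>\<omega>. Y \<omega> * Z \<omega>)"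
  shows "covariance M Y Z = expectation (\<lambda>\<omega>. Y \<omega> * Z \<omega>) - expectation Y * expectation Z"
proof -
  have "covariance M Y Z = expectation (\<lambda>\<omega>. (Y \<omega> * Z \<omega> - expectation Z * Y \<omega>)
      - (expectation Y * Z \<omega> - expectation Y * expectation Z))"
    unfolding covariance_def by (rule Bochner_Integration.integral_cong) (auto simp: algebra_simps)
  also have "\<dots> = expectation (\<lambda>\<omega>. Y \<omega> * Z \<omega>) - expectation Y * expectation Z"
    using assms prob_space by (simp add: Bochner_Integration.integral_diff)
  finally show ?thesis .
qed

section \<open>The multivariate Pareto model\<close>

lemma prod_powr_binary_split:
  fixes a b \<gamma> :: "nat \<Rightarrow> real" and u v :: real
  assumes "\<forall>j\<in>J. a j \<in> {0, 1}" "\<forall>j\<in>J. b j \<in> {0, 1}" and u: "u \<ge> 0" and v: "v \<ge> 0"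
  shows "(\<Prod>j\<in>J. (1 + a j * u + b j * v) powr (-\<gamma> j)) =
    (1 + u) powr (-((\<Sum>j\<in>J. a j * \<gamma> j) - (\<Sum>j\<in>J. a j * b j * \<gamma> j))) *
    (1 + v) powr (-((\<Sum>j\<in>J. b j * \<gamma> j) - (\<Sum>j\<in>J. a j * b j * \<gamma> j))) *
    (1 + u + v) powr (-(\<Sum>j\<in>J. a j * b j * \<gamma> j))"
proof (cases "finite J")
  case True
  have "(1 + a j * u + b j * v) powr (-\<gamma> j) = (1 + u) powr (-(a j * \<gamma> j - a j * b j * \<gamma> j))
      * (1 + v) powr (-(b j * \<gamma> j - a j * b j * \<gamma> j)) * (1 + u + v) powr (-(a j * b j * \<gamma> j))" if "j \<in> J" for j
  proof -
    have "a j \<in> {0, 1}" "b j \<in> {0, 1}" using assms that by auto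
    then show ?thesis using u v by (auto simp: add_pos_nonneg)
  qed
  then have "(\<Prod>j\<in>J. (1 + a j * u + b j * v) powr (-\<gamma> j))
      = (1 + u) powr (\<Sum>j\<in>J. -(a j * \<gamma> j - a j * b j * \<gamma> j)) * (1 + v) powr (\<Sum>j\<in>J. -(b j * \<gamma> j - a j * b j * \<gamma> j))
        * (1 + u + v) powr (\<Sum>j\<in>J. -(a j * b j * \<gamma> j))"
    using u v True by (simp add: prod.distrib powr_sum)
  then show ?thesis by (simp add: sum_negf sum_subtractf)
qed (use u v in simp)

definition pareto_survival :: "nat \<Rightarrow> (nat \<Rightarrow> nat \<Rightarrow> real) \<Rightarrow> (nat \<Rightarrow> real) \<Rightarrow> (nat \<Rightarrow> real) \<Rightarrow> (nat \<Rightarrow> real) \<Rightarrow> real" where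
  "pareto_survival n c \<sigma> \<gamma> x = (\<Prod>j=1..n+1. (1 + (\<Sum>i=1..n. c i j / \<sigma> i * x i)) powr (- \<gamma> j))"

locale multivariate_pareto = prob_space M for M :: "'a measure" +
  fixes X :: "nat \<Rightarrow> 'a \<Rightarrow> real" and n :: nat and c :: "nat \<Rightarrow> nat \<Rightarrow> real" and \<sigma> \<gamma> :: "nat \<Rightarrow> real"
  assumes c_01: "\<And>i j. i \<in> {1..n} \<Longrightarrow> j \<in> {1..n+1} \<Longrightarrow> c i j \<in> {0, 1}"
    and \<sigma>_pos: "\<And>i. i \<in> {1..n} \<Longrightarrow> \<sigma> i > 0"
    and \<gamma>_pos: "\<And>j. j \<in> {1..n+1} \<Longrightarrow> \<gamma> j > 0"
    and X_measurable[measurable]: "\<And>i. i \<in> {1..n} \<Longrightarrow> X i \<in> borel_measurable M"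
    and survival: "\<And>x. \<forall>i\<in>{1..n}. x i > 0 \<Longrightarrow>
           measure M {\<omega> \<in> space M. \<forall>i\<in>{1..n}. X i \<omega> > x i} = pareto_survival n c \<sigma> \<gamma> x"
begin

definition shape :: "nat \<Rightarrow> real" where
  "shape k = (\<Sum>j=1..n+1. c k j * \<gamma> j)"

definition common_shape :: "nat \<Rightarrow> nat \<Rightarrow> real" where
  "common_shape k l = (\<Sum>j=1..n+1. c k j * c l j * \<gamma> j)"

lemma common_shape_bounds:
  assumes k: "k \<in> {1..n}" and l: "l \<in> {1..n}"
  shows "0 \<le> common_shape k l" "common_shape k l \<le> shape k"
proof -
  have "0 \<le> c k j * c l j * \<gamma> j \<and> c k j * c l j * \<gamma> j \<le> c k j * \<gamma> j" if "j \<in> {1..n+1}" for j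
    using c_01[OF k that] c_01[OF l that] \<gamma>_pos[OF that] by auto
  then show "0 \<le> common_shape k l" "common_shape k l \<le> shape k"
    unfolding common_shape_def shape_def by (blast intro: sum_nonneg sum_mono)+
qed

lemma survival_nonneg:
  assumes x: "\<forall>i\<in>{1..n}. x i \<ge> 0"
  shows "measure M {\<omega> \<in> space M. \<forall>i\<in>{1..n}. X i \<omega> > x i} = pareto_survival n c \<sigma> \<gamma> x"
proof (rule measure_survival_eq_from_above)
  show "measure M {\<omega> \<in> space M. \<forall>i\<in>{1..n}. X i \<omega> > y i} = pareto_survival n c \<sigma> \<gamma> y"
    if "\<forall>i\<in>{1..n}. y i > x i" for y
    using survival that x by (meson le_less_trans)
  have pos: "1 + (\<Sum>i=1..n. c i j / \<sigma> i * x i) \<noteq> 0" if "j \<in> {1..n+1}" for j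
  proof -
    have "c i j / \<sigma> i * x i \<ge> 0" if "i \<in> {1..n}" for i
      using c_01[OF that \<open>j \<in> {1..n+1}\<close>] \<sigma>_pos[OF that] x that by auto
    then have "1 + (\<Sum>i=1..n. c i j / \<sigma> i * x i) > 0" by (intro add_pos_nonneg sum_nonneg) auto
    then show ?thesis by simp
  qed
  moreover have "(\<lambda>m. x i + inverse (real (Suc m))) \<longlonglongrightarrow> x i" for i
    using tendsto_add[OF tendsto_const LIMSEQ_inverse_real_of_nat, of "x i"] by simp
  ultimately show "(\<lambda>m. pareto_survival n c \<sigma> \<gamma> (\<lambda>i. x i + inverse (real (Suc m)))) \<longlonglongrightarrow> pareto_survival n c \<sigma> \<gamma> x"
    unfolding pareto_survival_def
    by (intro tendsto_prod tendsto_powr tendsto_add tendsto_const tendsto_sum tendsto_mult) (auto dest: pos)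
qed (simp_all add: X_measurable)

lemma AE_X_pos: "AE \<omega> in M. \<forall>i\<in>{1..n}. X i \<omega> > 0"
proof -
  have S: "{\<omega> \<in> space M. \<forall>i\<in>{1..n}. X i \<omega> > 0} \<in> sets M" by measurable
  have "prob {\<omega> \<in> space M. \<forall>i\<in>{1..n}. X i \<omega> > 0} = 1"
    using survival_nonneg[of "\<lambda>_. 0"] by (simp add: pareto_survival_def)
  then have "AE \<omega> in M. \<omega> \<in> {\<omega> \<in> space M. \<forall>i\<in>{1..n}. X i \<omega> > 0}"
    using prob_eq_1[OF S] by simp
  then show ?thesis by eventually_elim auto
qed

lemma AE_X_nonneg: "i \<in> {1..n} \<Longrightarrow> AE \<omega> in M. X i \<omega> \<ge> 0"
  using AE_X_pos by eventually_elim (meson less_imp_le)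

lemma pair_survival:
  assumes k: "k \<in> {1..n}" and l: "l \<in> {1..n}" and "k \<noteq> l" and s: "s \<ge> 0" and t: "t \<ge> 0"
  shows "measure M {\<omega> \<in> space M. X k \<omega> > s \<and> X l \<omega> > t} =
      (1 + s/\<sigma> k) powr (-(shape k - common_shape k l)) * (1 + t/\<sigma> l) powr (-(shape l - common_shape k l))
      * (1 + s/\<sigma> k + t/\<sigma> l) powr (-common_shape k l)"
proof -
  define x where "x i = (if i = k then s else if i = l then t else 0)" for i
  have "measure M {\<omega> \<in> space M. X k \<omega> > s \<and> X l \<omega> > t} = measure M {\<omega> \<in> space M. \<forall>i\<in>{1..n}. X i \<omega> > x i}"
    using AE_X_pos k l \<open>k \<noteq> l\<close> by (intro measure_eq_AE) (auto simp: x_def elim!: eventually_mono)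
  also have "\<dots> = (\<Prod>j=1..n+1. (1 + c k j * (s/\<sigma> k) + c l j * (t/\<sigma> l)) powr (- \<gamma> j))"
  proof -
    have "(\<Sum>i=1..n. c i j / \<sigma> i * x i) = c k j * (s/\<sigma> k) + c l j * (t/\<sigma> l)" for j
      using k l \<open>k \<noteq> l\<close> by (simp add: x_def if_distrib sum.If_cases)
    then show ?thesis
      using survival_nonneg[of x] s t by (simp add: x_def pareto_survival_def add.assoc)
  qed
  also have "\<dots> = (1 + s/\<sigma> k) powr (-(shape k - common_shape k l)) * (1 + t/\<sigma> l) powr (-(shape l - common_shape k l))
      * (1 + s/\<sigma> k + t/\<sigma> l) powr (-common_shape k l)"
    unfolding shape_def common_shape_def
    using c_01 \<sigma>_pos[OF k] \<sigma>_pos[OF l] k l s t by (intro prod_powr_binary_split) auto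
  finally show ?thesis .
qed

lemma marginal_survival:
  assumes k: "k \<in> {1..n}" and s: "s \<ge> 0"
  shows "measure M {\<omega> \<in> space M. X k \<omega> > s} = (1 + s/\<sigma> k) powr (- shape k)"
proof -
  define x where "x i = (if i = k then s else 0)" for i
  have "measure M {\<omega> \<in> space M. X k \<omega> > s} = measure M {\<omega> \<in> space M. \<forall>i\<in>{1..n}. X i \<omega> > x i}"
    using AE_X_pos k by (intro measure_eq_AE) (auto simp: x_def elim!: eventually_mono)
  also have "\<dots> = (\<Prod>j=1..n+1. (1 + c k j * (s/\<sigma> k) + 0 * 0) powr (- \<gamma> j))"
  proof -
    have "(\<Sum>i=1..n. c i j / \<sigma> i * x i) = (\<Sum>i=1..n. if i = k then c k j * (s/\<sigma> k) else 0)" for j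
      by (intro sum.cong) (auto simp: x_def)
    then have "(\<Sum>i=1..n. c i j / \<sigma> i * x i) = c k j * (s/\<sigma> k)" for j
      using k by simp
    then show ?thesis
      using survival_nonneg[of x] s by (simp add: x_def pareto_survival_def)
  qed
  also have "\<dots> = (1 + s/\<sigma> k) powr (- shape k)"
    unfolding shape_def
    using prod_powr_binary_split[of "{1..n+1}" "c k" "\<lambda>_. 0" "s/\<sigma> k" 0 \<gamma>] c_01 \<sigma>_pos[OF k] k s
    by simp
  finally show ?thesis .
qed

lemma nn_integral_X:
  assumes k: "k \<in> {1..n}" and shape: "shape k > 1"
  shows "(\<integral>\<^sup>+\<omega>. ennreal (X k \<omega>) \<partial>M) = ennreal (\<sigma> k / (shape k - 1))"
proof -
  have "(\<integral>\<^sup>+\<omega>. ennreal (X k \<omega>) \<partial>M) = (\<integral>\<^sup>+s\<in>{0..}. emeasure M {\<omega>\<in>space M. X k \<omega> > s} \<partial>lborel)"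
    using k AE_X_nonneg[OF k] by (intro nn_integral_eq_nn_integral_survival) (auto intro: sigma_finite_measure)
  also have "\<dots> = (\<integral>\<^sup>+s\<in>{0..}. ennreal ((1 + s/\<sigma> k) powr (- shape k)) \<partial>lborel)"
    using k by (intro nn_integral_cong) (auto simp: indicator_def emeasure_eq_measure marginal_survival)
  also have "\<dots> = ennreal (\<sigma> k / (shape k - 1))"
    using nn_integral_shifted_powr shape \<sigma>_pos[OF k] by blast
  finally show ?thesis .
qed

lemma nn_integral_X_mult:
  assumes k: "k \<in> {1..n}" and l: "l \<in> {1..n}" and "k \<noteq> l" and "shape k > 1" "shape l > 2"
  shows "(\<integral>\<^sup>+\<omega>. ennreal (X k \<omega> * X l \<omega>) \<partial>M) = ennreal (\<sigma> k * \<sigma> l / ((shape k - 1) * (shape l - 1))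
      * hypergeom [common_shape k l, 1, 1] [shape k, shape l] 1)"
proof -
  have "AE \<omega> in M. X k \<omega> \<ge> 0 \<and> X l \<omega> \<ge> 0"
    using AE_X_nonneg[OF k] AE_X_nonneg[OF l] by (rule AE_conjI)
  then have "(\<integral>\<^sup>+\<omega>. ennreal (X k \<omega> * X l \<omega>) \<partial>M) =
      (\<integral>\<^sup>+s\<in>{0..}. (\<integral>\<^sup>+t\<in>{0..}. emeasure M {\<omega>\<in>space M. X k \<omega> > s \<and> X l \<omega> > t} \<partial>lborel) \<partial>lborel)"
    using k l by (intro nn_integral_mult_eq_nn_integral_joint_survival) (auto intro: sigma_finite_measure)
  also have "\<dots> = (\<integral>\<^sup>+s\<in>{0..}. (\<integral>\<^sup>+t\<in>{0..}. ennreal ((1 + s/\<sigma> k) powr (-(shape k - common_shape k l))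
      * (1 + t/\<sigma> l) powr (-(shape l - common_shape k l)) * (1 + s/\<sigma> k + t/\<sigma> l) powr (-common_shape k l)) \<partial>lborel) \<partial>lborel)"
  proof (intro nn_integral_cong)
    fix s :: real
    have "s \<ge> 0 \<Longrightarrow> (\<integral>\<^sup>+t\<in>{0..}. emeasure M {\<omega>\<in>space M. X k \<omega> > s \<and> X l \<omega> > t} \<partial>lborel)
      = (\<integral>\<^sup>+t\<in>{0..}. ennreal ((1 + s/\<sigma> k) powr (-(shape k - common_shape k l))
          * (1 + t/\<sigma> l) powr (-(shape l - common_shape k l)) * (1 + s/\<sigma> k + t/\<sigma> l) powr (-common_shape k l)) \<partial>lborel)"
      using assms by (intro nn_integral_cong) (auto simp: indicator_def emeasure_eq_measure pair_survival)
    then show "(\<integral>\<^sup>+t\<in>{0..}. emeasure M {\<omega>\<in>space M. X k \<omega> > s \<and> X l \<omega> > t} \<partial>lborel) * indicator {0..} s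
      = (\<integral>\<^sup>+t\<in>{0..}. ennreal ((1 + s/\<sigma> k) powr (-(shape k - common_shape k l))
          * (1 + t/\<sigma> l) powr (-(shape l - common_shape k l)) * (1 + s/\<sigma> k + t/\<sigma> l) powr (-common_shape k l)) \<partial>lborel)
          * indicator {0..} s"
      by (simp add: indicator_def)
  qed
  also have "\<dots> = ennreal (\<sigma> k * \<sigma> l / ((shape k - 1) * (shape l - 1))
      * hypergeom [common_shape k l, 1, 1] [shape k, shape l] 1)"
    using assms \<sigma>_pos[OF k] \<sigma>_pos[OF l] common_shape_bounds[OF k l]
    by (intro nn_integral_mixed_powr_product) auto
  finally show ?thesis .
qed

lemma covariance_X:
  assumes k: "k \<in> {1..n}" and l: "l \<in> {1..n}" and "k \<noteq> l" and "shape k > 1" "shape l > 2"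
  shows "covariance M (X k) (X l) = \<sigma> k * \<sigma> l / ((shape k - 1) * (shape l - 1))
      * (hypergeom [common_shape k l, 1, 1] [shape k, shape l] 1 - 1)"
proof -
  define C where "C = \<sigma> k * \<sigma> l / ((shape k - 1) * (shape l - 1))"
  define H where "H = hypergeom [common_shape k l, 1, 1] [shape k, shape l] 1"
  have "0 \<le> C * H"
    unfolding C_def H_def
    using assms \<sigma>_pos[OF k] \<sigma>_pos[OF l] common_shape_bounds[OF k l]
    by (intro mult_nonneg_nonneg hypergeom_3F2_at_1_nonneg) auto
  have XY_nonneg: "AE \<omega> in M. 0 \<le> X k \<omega> * X l \<omega>"
    using AE_X_nonneg[OF k] AE_X_nonneg[OF l] by eventually_elim simp
  have "integrable M (X k)" "expectation (X k) = \<sigma> k / (shape k - 1)"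
    using nn_integral_X[OF k] AE_X_nonneg[OF k] assms \<sigma>_pos[OF k]
    by (auto intro: integrableI_nonneg simp: integral_eq_nn_integral)
  moreover have "integrable M (X l)" "expectation (X l) = \<sigma> l / (shape l - 1)"
    using nn_integral_X[OF l] AE_X_nonneg[OF l] assms \<sigma>_pos[OF l]
    by (auto intro: integrableI_nonneg simp: integral_eq_nn_integral)
  moreover have "integrable M (\<lambda>\<omega>. X k \<omega> * X l \<omega>)" "expectation (\<lambda>\<omega>. X k \<omega> * X l \<omega>) = C * H"
    using nn_integral_X_mult[OF assms] XY_nonneg \<open>0 \<le> C * H\<close> k l
    unfolding C_def H_def by (auto intro: integrableI_nonneg simp: integral_eq_nn_integral)
  moreover have "\<sigma> k / (shape k - 1) * (\<sigma> l / (shape l - 1)) = C"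
    unfolding C_def by simp
  ultimately have "covariance M (X k) (X l) = C * H - C"
    by (simp add: covariance_eq)
  then show ?thesis
    unfolding C_def H_def by (simp add: right_diff_distrib)
qed

end

theorem theorem3p1:
  fixes M :: "'a measure" and X :: "nat \<Rightarrow> 'a \<Rightarrow> real"
    and n :: nat and c :: "nat \<Rightarrow> nat \<Rightarrow> real"
    and \<sigma> \<gamma> :: "nat \<Rightarrow> real" and k l :: nat
  assumes "prob_space M"
    and "n \<ge> 2"
    and "\<forall>i\<in>{1..n}. \<forall>j\<in>{1..n+1}. c i j \<in> {0, 1}"
    and "\<forall>i\<in>{1..n}. \<sigma> i > 0"
    and "\<forall>j\<in>{1..n+1}. \<gamma> j > 0"
    and "\<forall>i\<in>{1..n}. X i \<in> borel_measurable M"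
    and "\<forall>x :: nat \<Rightarrow> real. (\<forall>i\<in>{1..n}. x i > 0) \<longrightarrow>
           measure M {\<omega> \<in> space M. \<forall>i\<in>{1..n}. X i \<omega> > x i}
           = (\<Prod>j=1..n+1. (1 + (\<Sum>i=1..n. c i j / \<sigma> i * x i)) powr (- \<gamma> j))"
    and "k \<in> {1..n}" and "l \<in> {1..n}" and "k \<noteq> l"
    and "(\<Sum>j=1..n+1. c k j * \<gamma> j) > 2"
    and "(\<Sum>j=1..n+1. c l j * \<gamma> j) > 2"
  shows "covariance M (X k) (X l) =
           \<sigma> k * \<sigma> l
           / (((\<Sum>j=1..n+1. c k j * \<gamma> j) - 1) * ((\<Sum>j=1..n+1. c l j * \<gamma> j) - 1))
           * (hypergeom [\<Sum>j=1..n+1. c k j * c l j * \<gamma> j, 1, 1]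
                        [\<Sum>j=1..n+1. c k j * \<gamma> j, \<Sum>j=1..n+1. c l j * \<gamma> j] 1 - 1)"
proof -
  interpret multivariate_pareto M X n c \<sigma> \<gamma>
    using assms(3-7)
    by (intro multivariate_pareto.intro multivariate_pareto_axioms.intro assms(1))
      (simp_all add: pareto_survival_def)
  have "shape k > 1" "shape l > 2"
    using assms(11,12) unfolding shape_def by simp_all
  from covariance_X[OF assms(8-10) this] show ?thesis
    unfolding shape_def common_shape_def .
qed

end
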